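(* Let $\beta\in\mathbb{F}_{p^m}\setminus\{0\}$. The isodual $(\alpha+\beta u)$-constacyclic codes of length $4p^s$ over $R$ are exactly the codes $$\left\langle\left(x^2+\gamma x+\tfrac{\gamma^2}{2}\right)^i\left(x^2-\gamma x+\tfrac{\gamma^2}{2}\right)^{2p^s-i}\right\rangle,\qquad 0\le i\le 2p^s,$$ (ideals of $R[x]/\langle x^{4p^s}-(\alpha+\beta u)\rangle$).
   Context: Let $p$ be an odd prime and $m,s$ positive integers with $p^m\equiv 3\pmod 4$; $\mathbb{F}_{p^m}$ is the field with $p^m$ elements and $R=\mathbb{F}_{p^m}[u]/\langle u^2\rangle$. Fix $\alpha\in\mathbb{F}_{p^m}\setminus\{0\}$ that is not a square in $\mathbb{F}_{p^m}$, let $\alpha_0\in\mathbb{F}_{p^m}$ satisfy $\alpha_0^{p^s}=\alpha$, and let $\gamma\in\mathbb{F}_{p^m}$ satisfy $\gamma^4+4\alpha_0=0$. A $\lambda$-constacyclic code of length $n$ over $R$ ($\lambda$ a unit) is an $R$-submodule of $R^n$ closed under $(c_0,\dots,c_{n-1})\mapsto(\lambda c_{n-1},c_0,\dots,c_{n-2})$, identified with an ideal of $R[x]/\langle x^n-\lambda\rangle$. Its dual $\mathcal{C}^\perp$ is taken w.r.t. the standard inner product $a\cdot c=\sum a_kc_k$. A code $\mathcal{C}$ is isodual if there is a monomial map $T(c_0,\dots,c_{n-1})=(u_0c_{\sigma(0)},\dots,u_{n-1}c_{\sigma(n-1)})$ ($\sigma$ a permutation of $\{0,\dots,n-1\}$,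 $u_k$ units of $R$) with $T(\mathcal{C})=\mathcal{C}^\perp$. *)

theory Defs
  imports "HOL-Computational_Algebra.Polynomial" "HOL-Combinatorics.Permutations"
begin

text \<open>An element DN a b represents a + b u with u^2 = 0.\<close>

datatype 'a dnum = DN (re: 'a) (ep: 'a)

instantiation dnum :: (comm_ring_1) comm_ring_1
begin

definition zero_dnum :: "'a dnum" where "zero_dnum = DN 0 0"
definition one_dnum :: "'a dnum" where "one_dnum = DN 1 0"
definition plus_dnum :: "'a dnum \<Rightarrow> 'a dnum \<Rightarrow> 'a dnum"
  where "plus_dnum x y = DN (re x + re y) (ep x + ep y)"
definition minus_dnum :: "'a dnum \<Rightarrow> 'a dnum \<Rightarrow> 'a dnum"
  where "minus_dnum x y = DN (re x - re y) (ep x - ep y)"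
definition uminus_dnum :: "'a dnum \<Rightarrow> 'a dnum"
  where "uminus_dnum x = DN (- re x) (- ep x)"
definition times_dnum :: "'a dnum \<Rightarrow> 'a dnum \<Rightarrow> 'a dnum"
  where "times_dnum x y = DN (re x * re y) (re x * ep y + ep x * re y)"

instance
  by standard (auto simp: zero_dnum_def one_dnum_def plus_dnum_def minus_dnum_def
      uminus_dnum_def times_dnum_def algebra_simps intro: dnum.expand)

end

definition u_dn :: "'a::comm_ring_1 dnum" where "u_dn = DN 0 1"
definition emb :: "'a::comm_ring_1 \<Rightarrow> 'a dnum" where "emb a = DN a 0"

definition linear_code :: "nat \<Rightarrow> 'r::comm_ring_1 list set \<Rightarrow> bool" where
  "linear_code n C \<longleftrightarrow> (\<forall>c\<in>C. length c = n) \<and> replicate n 0 \<in> C \<and>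
     (\<forall>a\<in>C. \<forall>b\<in>C. map2 (+) a b \<in> C) \<and> (\<forall>r. \<forall>a\<in>C. map ((*) r) a \<in> C)"

definition const_shift :: "'r::comm_ring_1 \<Rightarrow> 'r list \<Rightarrow> 'r list" where
  "const_shift lam c = (lam * last c) # butlast c"

definition constacyclic_code :: "nat \<Rightarrow> 'r::comm_ring_1 \<Rightarrow> 'r list set \<Rightarrow> bool" where
  "constacyclic_code n lam C \<longleftrightarrow> linear_code n C \<and> (\<forall>c\<in>C. const_shift lam c \<in> C)"

definition inner :: "'r::comm_ring_1 list \<Rightarrow> 'r list \<Rightarrow> 'r" where
  "inner a c = sum_list (map2 (*) a c)"

definition dual_code :: "nat \<Rightarrow> 'r::comm_ring_1 list set \<Rightarrow> 'r list set" where
  "dual_code n C = {a. length a = n \<and> (\<forall>c\<in>C. inner a c = 0)}"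

definition monomial_map :: "nat \<Rightarrow> (nat \<Rightarrow> nat) \<Rightarrow> (nat \<Rightarrow> 'r::comm_ring_1) \<Rightarrow> 'r list \<Rightarrow> 'r list" where
  "monomial_map n \<sigma> w c = map (\<lambda>k. w k * c ! \<sigma> k) [0..<n]"

definition isodual :: "nat \<Rightarrow> 'r::comm_ring_1 list set \<Rightarrow> bool" where
  "isodual n C \<longleftrightarrow> (\<exists>\<sigma> w. \<sigma> permutes {..<n} \<and> (\<forall>k<n. w k dvd 1) \<and>
      monomial_map n \<sigma> w ` C = dual_code n C)"

text \<open>The ideal generated by g in R[x]/<x^n - lambda>, with residues identified with their
  coefficient vectors of length n.\<close>
definition principal_ideal_code :: "nat \<Rightarrow> 'r::comm_ring_1 \<Rightarrow> 'r poly \<Rightarrow> 'r list set" where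
  "principal_ideal_code n lam g =
     {c. length c = n \<and> (\<exists>f q. Poly c = f * g + q * (monom 1 n - [:lam:]))}"

end

theory Submission
  imports Defs "HOL-Computational_Algebra.Polynomial_Factorial" "HOL-Number_Theory.Residues"
begin

hide_const (open) UnivPoly.coeff UnivPoly.monom Module.smult

text \<open>Sending \<open>u\<close> to \<open>\<beta>\<inverse>(x\<^sup>n - \<alpha>)\<close> maps \<open>x\<^sup>n - (\<alpha> + \<beta>u)\<close> to \<open>0\<close> and identifies
  \<open>R[x]/\<langle>x\<^sup>n - (\<alpha> + \<beta>u)\<rangle>\<close> with \<open>F[x]/\<langle>(x\<^sup>n - \<alpha>)\<^sup>2\<rangle>\<close>. So the \<open>(\<alpha> + \<beta>u)\<close>-constacyclic
  codes are the codes of the divisors \<open>G\<close> of \<open>(x\<^sup>n - \<alpha>)\<^sup>2\<close>, the dual of the code of \<open>G\<close> is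
  the reversed code of \<open>(x\<^sup>n - \<alpha>)\<^sup>2 / G\<close>, and counting codewords shows that an isodual code
  has \<open>deg G = n\<close>. For \<open>n = 4p\<^sup>s\<close> the Frobenius map and the Sophie Germain identity
  \<open>x\<^sup>4 - \<alpha>\<^sub>0 = f\<^sub>1 f\<^sub>2\<close> give \<open>(x\<^sup>n - \<alpha>)\<^sup>2 = (f\<^sub>1 f\<^sub>2)\<^bsup>2p\<^sup>s\<^esup>\<close>, where \<open>f\<^sub>1, f\<^sub>2\<close> are
  irreducible (a root would make \<open>\<alpha>\<close> a square) and \<open>f\<^sub>2(x) = f\<^sub>1(-x)\<close>. Hence
  \<open>G = f\<^sub>1\<^sup>i f\<^sub>2\<^bsup>2p\<^sup>s-i\<^esup>\<close>, and for these \<open>G\<close> the substitution \<open>x \<mapsto> -x\<close> followed by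
  reversal is a monomial map onto the dual.\<close>

lemma re_add [simp]: "re (x + y) = re x + re y" by (simp add: plus_dnum_def)
lemma ep_add [simp]: "ep (x + y) = ep x + ep y" by (simp add: plus_dnum_def)
lemma re_diff [simp]: "re (x - y) = re x - re y" by (simp add: minus_dnum_def)
lemma ep_diff [simp]: "ep (x - y) = ep x - ep y" by (simp add: minus_dnum_def)
lemma re_uminus [simp]: "re (- x) = - re x" by (simp add: uminus_dnum_def)
lemma ep_uminus [simp]: "ep (- x) = - ep x" by (simp add: uminus_dnum_def)
lemma re_mult [simp]: "re (x * y) = re x * re y" by (simp add: times_dnum_def)
lemma ep_mult [simp]: "ep (x * y) = re x * ep y + ep x * re y" by (simp add: times_dnum_def)
lemma re_zero [simp]: "re 0 = 0" by (simp add: zero_dnum_def)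
lemma ep_zero [simp]: "ep 0 = 0" by (simp add: zero_dnum_def)
lemma re_one [simp]: "re 1 = 1" by (simp add: one_dnum_def)
lemma ep_one [simp]: "ep 1 = 0" by (simp add: one_dnum_def)
lemma re_emb [simp]: "re (emb a) = a" by (simp add: emb_def)
lemma ep_emb [simp]: "ep (emb a) = 0" by (simp add: emb_def)
lemma emb_0 [simp]: "emb 0 = 0" by (simp add: emb_def zero_dnum_def)
lemma emb_1 [simp]: "emb 1 = 1" by (simp add: emb_def one_dnum_def)

lemma re_sum: "re (sum f A) = (\<Sum>x\<in>A. re (f x))"
  by (induction A rule: infinite_finite_induct) auto
lemma ep_sum: "ep (sum f A) = (\<Sum>x\<in>A. ep (f x))"
  by (induction A rule: infinite_finite_induct) auto

lemma map_poly_emb_pCons [simp]: "map_poly emb (pCons a p) = pCons (emb a) (map_poly emb p)"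
  by (simp add: map_poly_pCons)

lemma degree_less_iff_coeff_eq_0: "0 < m \<Longrightarrow> degree P < m \<longleftrightarrow> (\<forall>k\<ge>m. coeff P k = 0)"
proof
  assume "0 < m" "\<forall>k\<ge>m. coeff P k = 0"
  then have "degree P \<le> m - 1" by (intro degree_le) auto
  with \<open>0 < m\<close> show "degree P < m" by linarith
qed (auto intro: coeff_eq_0)

lemma Poly_map_coeff: "degree r < m \<Longrightarrow> Poly (map (coeff r) [0..<m]) = r"
  by (rule poly_eqI) (auto simp: nth_default_def coeff_eq_0)

lemma degree_Poly_less: "length c = m \<Longrightarrow> 0 < m \<Longrightarrow> degree (Poly c) < m"
  by (subst degree_less_iff_coeff_eq_0) (auto simp: nth_default_def)

lemma Poly_eq_imp_eq: assumes "length c = length d" "Poly c = Poly d" shows "c = d"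
proof (rule nth_equalityI)
  fix k assume "k < length c"
  have "coeff (Poly c) k = coeff (Poly d) k" by (simp only: assms(2))
  then show "c ! k = d ! k" using \<open>k < length c\<close> assms(1) by (simp add: nth_default_def)
qed (use assms in simp)

lemma Poly_map2_plus: "length a = length b \<Longrightarrow> Poly (map2 (+) a b) = Poly a + Poly b"
proof (induction a arbitrary: b)
  case (Cons x a) then show ?case by (cases b) auto
qed simp

lemma Poly_map_times: "Poly (map ((*) r) a) = [:r:] * Poly a"
  by (induction a) (auto simp: mult.commute)

lemma Poly_replicate_0 [simp]: "Poly (replicate k 0) = 0"
  by (induction k) auto

lemma Poly_const_shift:
  assumes "length c = n" "n > 0"
  shows "Poly (const_shift lam c) = [:0, 1:] * Poly c - [:last c:] * (monom 1 n - [:lam:])"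
proof -
  have c: "c = butlast c @ [last c]"
    using assms by (metis append_butlast_last_id length_0_conv less_not_refl)
  have "Poly c = Poly (butlast c) + monom (last c) (n - 1)"
    using assms(1) by (subst c) (simp add: Poly_append mult.commute smult_monom)
  moreover have "pCons 0 (monom (last c) (n - 1)) = monom (last c) n"
    using assms(2) by (cases n) (simp_all add: monom_Suc)
  ultimately have "[:0, 1:] * Poly c = pCons 0 (Poly (butlast c)) + monom (last c) n"
    by (simp add: distrib_left)
  moreover have "[:last c:] * (monom 1 n - [:lam:]) = monom (last c) n - [:last c * lam:]"
    by (simp add: right_diff_distrib smult_monom)
  ultimately show ?thesis by (simp add: const_shift_def mult.commute)
qed

lemma dvd_diff_trans: "(h::'b::comm_ring_1) dvd a - b \<Longrightarrow> h dvd b - c \<Longrightarrow> h dvd a - c"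
  by (metis diff_add_cancel add_diff_cancel_right dvd_add diff_diff_eq2 add.commute)

lemma dvd_diff_commute: "(h::'b::comm_ring_1) dvd a - b \<Longrightarrow> h dvd b - a"
  by (metis dvd_minus_iff minus_diff_eq)

lemma dvd_of_dvd_diff: "(g::'b::comm_ring_1) dvd h \<Longrightarrow> h dvd x - y \<Longrightarrow> g dvd y \<Longrightarrow> g dvd x"
  by (metis diff_add_cancel dvd_add dvd_trans)

section \<open>The isomorphism \<open>R[x]/\<langle>x\<^sup>n - (\<alpha> + \<beta>u)\<rangle> \<cong> F[x]/\<langle>(x\<^sup>n - \<alpha>)\<^sup>2\<rangle>\<close>\<close>

locale dnum_constacyclic =
  fixes n :: nat and \<alpha> \<beta> :: "'a::field"
  assumes n_pos: "n > 0" and beta_nonzero: "\<beta> \<noteq> 0"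
begin

definition E :: "'a poly" where "E = monom 1 n - [:\<alpha>:]"
definition H :: "'a poly" where "H = E ^ 2"
definition modulus :: "'a dnum poly" where "modulus = monom 1 n - [:DN \<alpha> \<beta>:]"

definition re_poly :: "'a dnum poly \<Rightarrow> 'a poly" where "re_poly P = map_poly re P"
definition ep_poly :: "'a dnum poly \<Rightarrow> 'a poly" where "ep_poly P = map_poly ep P"

definition psi :: "'a dnum poly \<Rightarrow> 'a poly" where
  "psi P = re_poly P + smult (inverse \<beta>) (E * ep_poly P)"

definition psi_word :: "'a dnum list \<Rightarrow> 'a poly" where "psi_word c = psi (Poly c)"

definition code_of :: "'a poly \<Rightarrow> 'a dnum list set" where
  "code_of G = {c. length c = n \<and> G dvd psi_word c}"

lemma coeff_re_poly [simp]: "coeff (re_poly P) k = re (coeff P k)"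
  by (simp add: re_poly_def coeff_map_poly)
lemma coeff_ep_poly [simp]: "coeff (ep_poly P) k = ep (coeff P k)"
  by (simp add: ep_poly_def coeff_map_poly)

lemma re_poly_add [simp]: "re_poly (P + Q) = re_poly P + re_poly Q" by (rule poly_eqI) simp
lemma ep_poly_add [simp]: "ep_poly (P + Q) = ep_poly P + ep_poly Q" by (rule poly_eqI) simp
lemma re_poly_diff [simp]: "re_poly (P - Q) = re_poly P - re_poly Q" by (rule poly_eqI) simp
lemma ep_poly_diff [simp]: "ep_poly (P - Q) = ep_poly P - ep_poly Q" by (rule poly_eqI) simp
lemma re_poly_0 [simp]: "re_poly 0 = 0" by (rule poly_eqI) simp
lemma ep_poly_0 [simp]: "ep_poly 0 = 0" by (rule poly_eqI) simp

lemma re_poly_mult [simp]: "re_poly (P * Q) = re_poly P * re_poly Q"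
  by (rule poly_eqI) (simp add: coeff_mult re_sum)
lemma ep_poly_mult: "ep_poly (P * Q) = re_poly P * ep_poly Q + ep_poly P * re_poly Q"
  by (rule poly_eqI) (simp add: coeff_mult ep_sum sum.distrib)

lemma psi_add [simp]: "psi (P + Q) = psi P + psi Q"
  by (simp add: psi_def algebra_simps smult_add_right)
lemma psi_diff [simp]: "psi (P - Q) = psi P - psi Q"
  by (simp add: psi_def algebra_simps smult_diff_right)
lemma psi_0 [simp]: "psi 0 = 0" by (simp add: psi_def)

lemma psi_map_poly_emb [simp]: "psi (map_poly emb f) = f"
proof -
  have "re_poly (map_poly emb f) = f" by (rule poly_eqI) (simp add: coeff_map_poly)
  moreover have "ep_poly (map_poly emb f) = 0" by (rule poly_eqI) (simp add: coeff_map_poly)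
  ultimately show ?thesis by (simp add: psi_def)
qed

lemma psi_1 [simp]: "psi 1 = 1"
  using psi_map_poly_emb[of 1] by simp

text \<open>The defect of multiplicativity is a multiple of \<open>E\<^sup>2\<close>, because \<open>u\<^sup>2 = 0\<close>.\<close>

lemma psi_mult_cong: "H dvd psi (P * Q) - psi P * psi Q"
proof -
  have "psi (P * Q) - psi P * psi Q =
      H * (- smult (inverse \<beta> * inverse \<beta>) (ep_poly P * ep_poly Q))"
    by (simp add: psi_def ep_poly_mult H_def power2_eq_square algebra_simps smult_add_right)
  then show ?thesis by (metis dvd_triv_left)
qed

lemma psi_mult_cong':
  assumes "H dvd psi A - a" "H dvd psi B - b" shows "H dvd psi (A * B) - a * b"
proof -
  have "psi (A * B) - a * b =
      (psi (A * B) - psi A * psi B) + (psi A - a) * psi B + a * (psi B - b)"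
    by (simp add: algebra_simps)
  then show ?thesis using assms psi_mult_cong by (metis dvd_add dvd_mult2 dvd_mult)
qed

lemma psi_power_cong: "H dvd psi A - a \<Longrightarrow> H dvd psi (A ^ k) - a ^ k"
  by (induction k) (simp_all add: psi_mult_cong')

lemma H_eq_power_if_E_eq_power: "E = P ^ q \<Longrightarrow> H = P ^ (2 * q)"
  by (simp add: H_def power_mult[symmetric] mult.commute)

lemma degree_E: "degree E = n"
  using n_pos unfolding E_def diff_conv_add_uminus
  by (subst degree_add_eq_left) (auto simp: degree_monom_eq)
lemma E_nonzero: "E \<noteq> 0" using degree_E n_pos by (metis degree_0 less_irrefl)
lemma H_nonzero: "H \<noteq> 0" using E_nonzero by (simp add: H_def)
lemma degree_H: "degree H = 2 * n"
  using degree_E by (simp add: H_def degree_power_eq E_nonzero)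

lemma degree_modulus: "degree modulus = n"
  using n_pos unfolding modulus_def diff_conv_add_uminus
  by (subst degree_add_eq_left) (auto simp: degree_monom_eq)

lemma modulus_nonzero: "modulus \<noteq> 0"
  using degree_modulus n_pos by auto

lemma lead_coeff_modulus: "lead_coeff modulus = 1"
proof -
  have "coeff modulus n = 1"
    using n_pos by (simp add: modulus_def coeff_monom coeff_pCons split: nat.splits)
  then show ?thesis by (simp add: degree_modulus)
qed

lemma psi_modulus [simp]: "psi modulus = 0"
proof -
  have "re_poly modulus = E"
    by (rule poly_eqI) (simp add: modulus_def E_def coeff_monom coeff_pCons split: nat.splits)
  moreover have "ep_poly modulus = - [:\<beta>:]"
    by (rule poly_eqI) (simp add: modulus_def coeff_monom coeff_pCons split: nat.splits)
  ultimately show ?thesis using beta_nonzero by (simp add: psi_def)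
qed

lemma H_dvd_psi_if_modulus_dvd: "modulus dvd X \<Longrightarrow> H dvd psi X"
  by (metis dvd_def mult.commute psi_modulus mult_zero_right diff_zero psi_mult_cong)

lemma modulus_division: obtains q r where "P = modulus * q + r" "degree r < n"
proof -
  obtain q r where "pseudo_divmod P modulus = (q, r)" by fastforce
  from pseudo_divmod[OF modulus_nonzero this] have "P = modulus * q + r" "degree r < n"
    using lead_coeff_modulus degree_modulus n_pos by auto
  then show thesis by (rule that)
qed

lemma degree_psi_less: assumes "degree r < n" shows "degree (psi r) < 2 * n"
proof -
  have "degree (re_poly r) < n" "degree (ep_poly r) < n"
    using assms n_pos by (auto simp: degree_less_iff_coeff_eq_0)
  moreover have "degree (smult (inverse \<beta>) (E * ep_poly r)) \<le> n + degree (ep_poly r)"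
    using degree_mult_le[of E "ep_poly r"] degree_E degree_smult_le[of "inverse \<beta>" "E * ep_poly r"]
    by simp
  ultimately show ?thesis
    unfolding psi_def by (intro le_less_trans[OF degree_add_le_max]) auto
qed

lemma psi_eq_0_imp_eq_0: assumes "degree r < n" "psi r = 0" shows "r = 0"
proof -
  have deg_re: "degree (re_poly r) < n" using assms(1) n_pos by (auto simp: degree_less_iff_coeff_eq_0)
  have ep: "ep_poly r = 0"
  proof (rule ccontr)
    assume "ep_poly r \<noteq> 0"
    then have "degree (smult (inverse \<beta>) (E * ep_poly r)) = n + degree (ep_poly r)"
      using beta_nonzero E_nonzero degree_E by (simp add: degree_mult_eq)
    then have "degree (psi r) = n + degree (ep_poly r)"
      unfolding psi_def using deg_re by (subst degree_add_eq_right) auto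
    then show False using assms(2) n_pos by simp
  qed
  then have "re_poly r = 0" using assms(2) by (simp add: psi_def)
  with ep show ?thesis
    by (intro poly_eqI dnum.expand) (metis coeff_re_poly coeff_ep_poly coeff_0 re_zero ep_zero)
qed

lemma modulus_dvd_if_H_dvd_psi: assumes "H dvd psi P" shows "modulus dvd P"
proof -
  obtain q r where qr: "P = modulus * q + r" "degree r < n" by (rule modulus_division)
  have "H dvd psi (modulus * q)" by (rule H_dvd_psi_if_modulus_dvd) simp
  then have "H dvd psi r" using assms qr(1) by (metis add_diff_cancel_left' dvd_diff psi_add)
  moreover have "degree (psi r) < degree H" using degree_psi_less[OF qr(2)] degree_H by simp
  ultimately have "psi r = 0" by (metis dvd_imp_degree_le leD)
  then have "r = 0" using psi_eq_0_imp_eq_0 qr(2) by blast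
  with qr show ?thesis by simp
qed

lemma degree_psi_word: "length c = n \<Longrightarrow> degree (psi_word c) < 2 * n"
  unfolding psi_word_def using degree_psi_less degree_Poly_less n_pos by blast

lemma psi_word_inj: assumes "length c = n" "length d = n" "psi_word c = psi_word d" shows "c = d"
proof -
  have "degree (Poly c - Poly d) < n"
    using degree_Poly_less[OF assms(1) n_pos] degree_Poly_less[OF assms(2) n_pos]
    by (intro degree_diff_less) auto
  moreover have "psi (Poly c - Poly d) = 0" using assms(3) by (simp add: psi_word_def)
  ultimately have "Poly c = Poly d" using psi_eq_0_imp_eq_0 by fastforce
  then show ?thesis using assms Poly_eq_imp_eq by metis
qed

text \<open>The preimage of \<open>a + E b\<close> has real part \<open>a\<close> and \<open>u\<close>-part \<open>\<beta> b\<close>.\<close>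

lemma psi_word_surj: assumes "degree P < 2 * n" obtains c where "length c = n" "psi_word c = P"
proof -
  define a where "a = P mod E"
  define b where "b = P div E"
  have P: "P = a + E * b" by (simp add: a_def b_def)
  have da: "degree a < n"
    using degree_mod_less[OF E_nonzero, of P] degree_E n_pos by (auto simp: a_def)
  have db: "degree b < n"
  proof (cases "b = 0")
    case False
    then have "degree P = n + degree b"
      using P da degree_E E_nonzero
      by (metis degree_add_eq_right degree_mult_eq le_add1 order.strict_trans2)
    then show ?thesis using assms by simp
  qed (use n_pos in simp)
  define c where "c = map (\<lambda>k. DN (coeff a k) (\<beta> * coeff b k)) [0..<n]"
  have "re_poly (Poly c) = a"
    by (rule poly_eqI) (use da in \<open>auto simp: c_def nth_default_def coeff_eq_0\<close>)
  moreover have "ep_poly (Poly c) = smult \<beta> b"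
    by (rule poly_eqI) (use db in \<open>auto simp: c_def nth_default_def coeff_eq_0\<close>)
  ultimately have "psi_word c = P" using beta_nonzero by (simp add: psi_word_def psi_def P)
  moreover have "length c = n" by (simp add: c_def)
  ultimately show ?thesis using that by blast
qed

end

section \<open>Constacyclic codes are the codes of the divisors of \<open>H\<close>\<close>

lemma principal_poly_ideal:
  fixes J :: "'a::field poly set"
  assumes add: "\<And>P Q. P \<in> J \<Longrightarrow> Q \<in> J \<Longrightarrow> P + Q \<in> J"
    and mult: "\<And>P Q. P \<in> J \<Longrightarrow> Q * P \<in> J"
    and X: "X \<in> J" "X \<noteq> 0"
  obtains G where "G \<noteq> 0" "\<And>P. P \<in> J \<longleftrightarrow> G dvd P"
proof -
  obtain G where G: "G \<in> J" "G \<noteq> 0" and min: "\<And>P. P \<in> J \<Longrightarrow> P \<noteq> 0 \<Longrightarrow> degree G \<le> degree P"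
    using ex_has_least_nat[of "\<lambda>P. P \<in> J \<and> P \<noteq> 0" X degree] X by blast
  have "G dvd P" if "P \<in> J" for P
  proof (rule ccontr)
    assume "\<not> G dvd P"
    then have "P mod G \<noteq> 0" by (simp add: mod_eq_0_iff_dvd)
    moreover have "P mod G \<in> J"
      using add[OF that mult[OF G(1), of "- (P div G)"]] by (simp add: minus_div_mult_eq_mod[symmetric])
    ultimately show False using degree_mod_less[of G P] G(2) min by fastforce
  qed
  moreover have "P \<in> J" if "G dvd P" for P
    using that mult[OF G(1)] by (auto simp: mult.commute)
  ultimately show thesis by (intro that[OF G(2)]) blast
qed

context dnum_constacyclic
begin

lemma psi_word_map2_plus: "length a = length b \<Longrightarrow> psi_word (map2 (+) a b) = psi_word a + psi_word b"
  by (simp add: psi_word_def Poly_map2_plus)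

lemma psi_word_map_times_cong: "H dvd psi_word (map ((*) r) c) - psi [:r:] * psi_word c"
  unfolding psi_word_def Poly_map_times by (rule psi_mult_cong)

lemma psi_word_const_shift_cong:
  assumes "length c = n"
  shows "H dvd psi_word (const_shift (DN \<alpha> \<beta>) c) - [:0, 1:] * psi_word c"
proof -
  have "psi_word (const_shift (DN \<alpha> \<beta>) c) = psi ([:0, 1:] * Poly c) - psi ([:last c:] * modulus)"
    unfolding psi_word_def using assms n_pos by (simp add: Poly_const_shift modulus_def)
  moreover have "H dvd psi ([:last c:] * modulus)" by (rule H_dvd_psi_if_modulus_dvd) (simp add: dvd_smult)
  moreover have "H dvd psi ([:0, 1:] * Poly c) - [:0, 1:] * psi_word c"
    using psi_mult_cong[of "[:0, 1:]" "Poly c"] psi_map_poly_emb[of "[:0, 1:]"]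
    by (simp add: psi_word_def)
  ultimately have "H dvd psi_word (const_shift (DN \<alpha> \<beta>) c) - psi ([:0, 1:] * Poly c)"
    using dvd_diff_commute[of H "psi ([:last c:] * modulus)" 0] by (simp add: diff_diff_eq2)
  then show ?thesis
    using dvd_diff_trans \<open>H dvd psi ([:0, 1:] * Poly c) - [:0, 1:] * psi_word c\<close> by blast
qed

lemma length_const_shift: "length c = n \<Longrightarrow> length (const_shift l c) = n"
  using n_pos by (simp add: const_shift_def)

lemma constacyclic_code_of:
  assumes "G dvd H" shows "constacyclic_code n (DN \<alpha> \<beta>) (code_of G)"
  unfolding constacyclic_code_def linear_code_def
proof (intro conjI ballI allI)
  show "replicate n 0 \<in> code_of G" by (simp add: code_of_def psi_word_def)
next
  fix a b assume "a \<in> code_of G" "b \<in> code_of G"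
  then show "map2 (+) a b \<in> code_of G" by (simp add: code_of_def psi_word_map2_plus)
next
  fix r a assume "a \<in> code_of G"
  then show "map ((*) r) a \<in> code_of G"
    using dvd_of_dvd_diff[OF assms psi_word_map_times_cong] by (simp add: code_of_def)
next
  fix c assume "c \<in> code_of G"
  then show "const_shift (DN \<alpha> \<beta>) c \<in> code_of G"
    using dvd_of_dvd_diff[OF assms psi_word_const_shift_cong] length_const_shift
    by (auto simp: code_of_def simp del: mult_pCons_left)
qed (simp add: code_of_def)

definition ideal_of_code :: "'a dnum list set \<Rightarrow> 'a poly set" where
  "ideal_of_code C = {P. \<exists>c\<in>C. H dvd P - psi_word c}"

lemma ideal_of_code_cong: "P \<in> ideal_of_code C \<Longrightarrow> H dvd P' - P \<Longrightarrow> P' \<in> ideal_of_code C"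
  unfolding ideal_of_code_def using dvd_diff_trans by blast

lemma ideal_of_code_add:
  assumes "linear_code n C" "P \<in> ideal_of_code C" "Q \<in> ideal_of_code C"
  shows "P + Q \<in> ideal_of_code C"
proof -
  obtain c d where cd: "c \<in> C" "d \<in> C" "H dvd P - psi_word c" "H dvd Q - psi_word d"
    using assms(2,3) unfolding ideal_of_code_def by blast
  then have "H dvd (P + Q) - psi_word (map2 (+) c d)"
    using assms(1) dvd_add[OF cd(3,4)]
    by (simp add: linear_code_def psi_word_map2_plus algebra_simps)
  moreover have "map2 (+) c d \<in> C" using assms(1) cd by (simp add: linear_code_def)
  ultimately show ?thesis by (auto simp: ideal_of_code_def)
qed

lemma ideal_of_code_smult:
  assumes "linear_code n C" "P \<in> ideal_of_code C"
  shows "smult a P \<in> ideal_of_code C"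
proof -
  obtain c where c: "c \<in> C" "H dvd P - psi_word c"
    using assms(2) unfolding ideal_of_code_def by blast
  have "H dvd smult a P - smult a (psi_word c)"
    using c(2) by (metis dvd_smult smult_diff_right)
  moreover have "H dvd psi_word (map ((*) (emb a)) c) - smult a (psi_word c)"
    using psi_word_map_times_cong[of "emb a" c] psi_map_poly_emb[of "[:a:]"] by simp
  moreover have "map ((*) (emb a)) c \<in> C" using assms(1) c by (simp add: linear_code_def)
  ultimately show ?thesis
    unfolding ideal_of_code_def using dvd_diff_trans dvd_diff_commute by blast
qed

lemma ideal_of_code_times_x:
  assumes "constacyclic_code n (DN \<alpha> \<beta>) C" "P \<in> ideal_of_code C"
  shows "[:0, 1:] * P \<in> ideal_of_code C"
proof -
  obtain c where c: "c \<in> C" "H dvd P - psi_word c"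
    using assms(2) unfolding ideal_of_code_def by blast
  have "length c = n"
    using assms(1) c(1) by (simp add: constacyclic_code_def linear_code_def)
  then have "H dvd psi_word (const_shift (DN \<alpha> \<beta>) c) - [:0, 1:] * psi_word c"
    by (rule psi_word_const_shift_cong)
  moreover have "H dvd [:0, 1:] * P - [:0, 1:] * psi_word c"
    using dvd_mult[OF c(2), of "[:0, 1:]"] by (simp add: right_diff_distrib)
  moreover have "const_shift (DN \<alpha> \<beta>) c \<in> C" using assms(1) c by (simp add: constacyclic_code_def)
  ultimately show ?thesis
    unfolding ideal_of_code_def using dvd_diff_trans dvd_diff_commute by blast
qed

lemma ideal_of_code_mult:
  assumes "constacyclic_code n (DN \<alpha> \<beta>) C" "P \<in> ideal_of_code C"
  shows "Q * P \<in> ideal_of_code C"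
proof -
  have lin: "linear_code n C" using assms(1) by (simp add: constacyclic_code_def)
  show ?thesis
  proof (induction Q)
    case 0
    show ?case using ideal_of_code_smult[OF lin assms(2), of 0] by simp
  next
    case (pCons a Q)
      have "pCons a Q * P = smult a P + [:0, 1:] * (Q * P)" by simp
    then show ?case
      using ideal_of_code_add[OF lin ideal_of_code_smult[OF lin assms(2)]
          ideal_of_code_times_x[OF assms(1) pCons(2)]] by simp
  qed
qed

text \<open>\<open>psi_word\<close> is injective modulo \<open>H\<close> on words of length \<open>n\<close>.\<close>

lemma mem_code_if_in_ideal_of_code:
  assumes "linear_code n C" "length c = n" "psi_word c \<in> ideal_of_code C"
  shows "c \<in> C"
proof -
  obtain d where d: "d \<in> C" "H dvd psi_word c - psi_word d"
    using assms(3) by (auto simp: ideal_of_code_def)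
  have "length d = n" using assms(1) d(1) by (simp add: linear_code_def)
  then have "degree (psi_word c - psi_word d) < degree H"
    using degree_diff_less[OF degree_psi_word[OF assms(2)] degree_psi_word] degree_H by simp
  then have "psi_word c = psi_word d" using d(2) by (metis dvd_imp_degree_le leD eq_iff_diff_eq_0)
  then show ?thesis using psi_word_inj[OF assms(2) \<open>length d = n\<close>] d(1) by simp
qed

lemma constacyclic_code_eq_code_of:
  assumes C: "constacyclic_code n (DN \<alpha> \<beta>) C"
  obtains G where "G \<noteq> 0" "G dvd H" "C = code_of G"
proof -
  have lin: "linear_code n C" using C by (simp add: constacyclic_code_def)
  have "replicate n 0 \<in> C" using lin by (simp add: linear_code_def)
  then have "0 \<in> ideal_of_code C" by (force simp: ideal_of_code_def psi_word_def)
  then have "H \<in> ideal_of_code C" by (rule ideal_of_code_cong) simp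
  then obtain G where G: "G \<noteq> 0" "\<And>P. P \<in> ideal_of_code C \<longleftrightarrow> G dvd P"
    using principal_poly_ideal[OF ideal_of_code_add[OF lin] ideal_of_code_mult[OF C]] H_nonzero
    by blast
  have "C = code_of G"
  proof (intro equalityI subsetI)
    fix c assume "c \<in> C"
    then have "psi_word c \<in> ideal_of_code C" unfolding ideal_of_code_def by force
    then show "c \<in> code_of G" using G(2) lin \<open>c \<in> C\<close> by (simp add: code_of_def linear_code_def)
  next
    fix c assume "c \<in> code_of G"
    then show "c \<in> C"
      using mem_code_if_in_ideal_of_code[OF lin] G(2) by (simp add: code_of_def)
  qed
  then show thesis using that G \<open>H \<in> ideal_of_code C\<close> by blast
qed

lemma principal_ideal_code_eq_code_of:
  assumes "F dvd H" "H dvd psi g - F"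
  shows "principal_ideal_code n (DN \<alpha> \<beta>) g = code_of F"
proof (intro equalityI subsetI)
  fix c assume "c \<in> principal_ideal_code n (DN \<alpha> \<beta>) g"
  then obtain f q where c: "length c = n" "Poly c = f * g + q * modulus"
    unfolding principal_ideal_code_def modulus_def by blast
  have "F dvd psi g" using dvd_of_dvd_diff[OF assms] by simp
  then have "F dvd psi (f * g)" using dvd_of_dvd_diff[OF assms(1) psi_mult_cong] by simp
  moreover have "F dvd psi (q * modulus)"
    using H_dvd_psi_if_modulus_dvd[of "q * modulus"] assms(1) by (simp add: dvd_trans)
  ultimately show "c \<in> code_of F" using c by (simp add: code_of_def psi_word_def)
next
  fix c assume "c \<in> code_of F"
  then have c: "length c = n" "F dvd psi_word c" by (simp_all add: code_of_def)
  then obtain k where k: "psi_word c = F * k" by (auto elim!: dvdE)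
  have "H dvd psi (map_poly emb k * g) - k * psi g"
    using psi_mult_cong[of "map_poly emb k" g] by simp
  moreover have "H dvd k * psi g - k * F"
    using dvd_mult[OF assms(2), of k] by (simp add: right_diff_distrib)
  ultimately have "H dvd psi (map_poly emb k * g) - psi_word c"
    using dvd_diff_trans k by (simp add: mult.commute)
  then have "H dvd psi (Poly c - map_poly emb k * g)"
    using dvd_diff_commute by (simp add: psi_word_def)
  then obtain q where "Poly c - map_poly emb k * g = modulus * q"
    by (blast dest: modulus_dvd_if_H_dvd_psi elim: dvdE)
  then have "Poly c = map_poly emb k * g + q * (monom 1 n - [:DN \<alpha> \<beta>:])"
    by (simp add: modulus_def algebra_simps)
  then show "c \<in> principal_ideal_code n (DN \<alpha> \<beta>) g"
    using c(1) unfolding principal_ideal_code_def by blast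
qed

end

section \<open>Duality\<close>

lemma degree_Poly_le: "degree (Poly c) \<le> length c - 1"
  by (cases "c = []") (use degree_Poly_less[of c "length c"] in auto)

lemma inner_eq_coeff_mult:
  assumes "length a = m" "length c = m" "0 < m"
  shows "inner a c = coeff (Poly (rev a) * Poly c) (m - 1)"
proof -
  have "coeff (Poly (rev a) * Poly c) (m - 1) =
      (\<Sum>i\<le>m - 1. coeff (Poly (rev a)) i * coeff (Poly c) (m - 1 - i))"
    by (rule coeff_mult)
  also have "\<dots> = (\<Sum>i<m. a ! (m - Suc i) * c ! (m - Suc i))"
  proof -
    have "{..m - 1} = {..<m}" using assms(3) by auto
    moreover have "coeff (Poly (rev a)) i * coeff (Poly c) (m - 1 - i) = a ! (m - Suc i) * c ! (m - Suc i)"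
      if "i < m" for i
      using that assms by (simp add: nth_default_def rev_nth)
    ultimately show ?thesis by (auto intro: sum.cong)
  qed
  also have "\<dots> = (\<Sum>j<m. a ! j * c ! j)"
    by (rule sum.nat_diff_reindex)
  also have "\<dots> = inner a c"
    unfolding inner_def using assms by (simp add: sum_list_sum_nth atLeast0LessThan)
  finally show ?thesis by simp
qed

context dnum_constacyclic
begin

lemma coeff_modulus_multiple:
  assumes "modulus dvd P" "degree P \<le> 2 * n - 2"
  shows "coeff P (n - 1) = 0"
proof -
  obtain q where P: "P = q * modulus" using assms(1) by (metis dvd_def mult.commute)
  show ?thesis
  proof (cases "q = 0")
    case False
    have "coeff P (degree q + n) = lead_coeff q"
      using coeff_mult_degree_sum[of q modulus] lead_coeff_modulus by (simp add: P degree_modulus)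
    then have "degree q + n \<le> degree P" using False by (metis le_degree leading_coeff_0_iff)
    then have "degree q < n - 1" using assms(2) n_pos by linarith
    moreover have "coeff P (n - 1) = coeff (monom 1 n * q) (n - 1) - coeff q (n - 1) * DN \<alpha> \<beta>"
      by (simp add: P modulus_def right_diff_distrib mult.commute)
    ultimately show ?thesis using n_pos by (simp add: coeff_monom_mult coeff_eq_0)
  qed (simp add: P)
qed

lemma reduce_mod_modulus: obtains c where "length c = n" "modulus dvd Q - Poly c"
proof -
  obtain q r where "Q = modulus * q + r" "degree r < n" by (rule modulus_division)
  then show thesis
    by (intro that[of "map (coeff r) [0..<n]"]) (simp_all add: Poly_map_coeff)
qed

lemma mem_code_of_if_reduction:
  assumes "G dvd H" "length c = n" "modulus dvd X * map_poly emb G - Poly c"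
  shows "c \<in> code_of G"
proof -
  have "H dvd psi (X * map_poly emb G) - psi_word c"
    using H_dvd_psi_if_modulus_dvd[OF assms(3)] by (simp add: psi_word_def)
  moreover have "H dvd psi (X * map_poly emb G) - psi X * G"
    using psi_mult_cong[of X "map_poly emb G"] by simp
  ultimately have "H dvd psi_word c - psi X * G"
    using dvd_diff_trans dvd_diff_commute by blast
  then show ?thesis using dvd_of_dvd_diff[OF assms(1)] assms(2) by (simp add: code_of_def)
qed

lemma rev_code_of_subset_dual:
  assumes "G dvd H"
  shows "rev ` code_of (H div G) \<subseteq> dual_code n (code_of G)"
proof
  fix b assume "b \<in> rev ` code_of (H div G)"
  then obtain a where b: "b = rev a" and a: "length a = n" "H div G dvd psi_word a"
    by (auto simp: code_of_def)
  have "inner b c = 0" if "c \<in> code_of G" for c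
  proof -
    have c: "length c = n" "G dvd psi_word c" using that by (auto simp: code_of_def)
    have "H dvd psi_word a * psi_word c"
      using mult_dvd_mono[OF a(2) c(2)] assms by simp
    then have "H dvd psi (Poly a * Poly c)"
      using dvd_of_dvd_diff[OF dvd_refl psi_mult_cong] by (simp add: psi_word_def)
    then have "modulus dvd Poly a * Poly c" by (rule modulus_dvd_if_H_dvd_psi)
    moreover have "degree (Poly a * Poly c) \<le> 2 * n - 2"
      using degree_mult_le[of "Poly a" "Poly c"] degree_Poly_le[of a] degree_Poly_le[of c] a(1) c(1)
      by linarith
    ultimately have "coeff (Poly a * Poly c) (n - 1) = 0" by (rule coeff_modulus_multiple)
    then show ?thesis using inner_eq_coeff_mult[of b n c] a(1) c(1) b n_pos by simp
  qed
  then show "b \<in> dual_code n (code_of G)" using a(1) b by (simp add: dual_code_def)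
qed

text \<open>Coefficient \<open>n - 1 - t\<close> of \<open>s\<close> is the inner product of \<open>b\<close> with the reduction of \<open>x\<^sup>t G\<close>,
  which is a codeword.\<close>

lemma coeff_reduction_eq_0:
  assumes "G dvd H" "length b = n" "\<And>c. c \<in> code_of G \<Longrightarrow> inner b c = 0"
    and s: "length s = n" "modulus dvd Poly (rev b) * map_poly emb G - Poly s"
    and "t < n"
  shows "coeff (Poly s) (n - 1 - t) = 0"
proof -
  define B where "B = Poly (rev b)"
  obtain c where c: "length c = n" "modulus dvd monom 1 t * map_poly emb G - Poly c"
    by (rule reduce_mod_modulus)
  have "c \<in> code_of G" using mem_code_of_if_reduction[OF assms(1) c] .
  then have i0: "coeff (B * Poly c) (n - 1) = 0"
    using assms(3) inner_eq_coeff_mult[OF assms(2) c(1) n_pos] by (simp add: B_def)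
  have "B * Poly c - monom 1 t * Poly s =
      - (B * (monom 1 t * map_poly emb G - Poly c)) + monom 1 t * (B * map_poly emb G - Poly s)"
    by (simp add: algebra_simps)
  then have "modulus dvd B * Poly c - monom 1 t * Poly s"
    using c(2) s(2) by (simp add: B_def dvd_add dvd_mult)
  moreover have "degree (B * Poly c - monom 1 t * Poly s) \<le> 2 * n - 2"
  proof (rule degree_diff_le)
    show "degree (B * Poly c) \<le> 2 * n - 2"
      using degree_mult_le[of B "Poly c"] degree_Poly_le[of c] degree_Poly_le[of "rev b"] c(1) assms(2)
      by (simp add: B_def)
    show "degree (monom 1 t * Poly s) \<le> 2 * n - 2"
      using degree_mult_le[of "monom (1::'a dnum) t" "Poly s"] degree_Poly_le[of s] s(1)
        degree_monom_le[of "1::'a dnum" t] \<open>t < n\<close> by linarith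
  qed
  ultimately have "coeff (B * Poly c - monom 1 t * Poly s) (n - 1) = 0"
    by (rule coeff_modulus_multiple)
  then have "coeff (monom 1 t * Poly s) (n - 1) = 0" using i0 by simp
  moreover have "coeff (monom 1 t * Poly s) (n - 1) = coeff (Poly s) (n - 1 - t)"
    using \<open>t < n\<close> by (simp add: coeff_monom_mult del: coeff_Poly_eq)
  ultimately show ?thesis by simp
qed

lemma dual_subset_rev_code_of:
  assumes "G \<noteq> 0" "G dvd H"
  shows "dual_code n (code_of G) \<subseteq> rev ` code_of (H div G)"
proof
  fix b assume "b \<in> dual_code n (code_of G)"
  then have b: "length b = n" "\<And>c. c \<in> code_of G \<Longrightarrow> inner b c = 0"
    by (auto simp: dual_code_def)
  obtain s where s: "length s = n" "modulus dvd Poly (rev b) * map_poly emb G - Poly s"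
    by (rule reduce_mod_modulus)
  have "Poly s = 0"
  proof (rule poly_eqI)
    fix j
    show "coeff (Poly s) j = coeff 0 j"
    proof (cases "j < n")
      case True
      then show ?thesis using coeff_reduction_eq_0[OF assms(2) b s, of "n - 1 - j"] by simp
    qed (use s(1) in \<open>simp add: nth_default_def\<close>)
  qed
  then have "H dvd psi (Poly (rev b) * map_poly emb G)"
    using s(2) by (simp add: H_dvd_psi_if_modulus_dvd)
  then have "H dvd psi_word (rev b) * G"
    using dvd_of_dvd_diff[OF dvd_refl dvd_diff_commute[OF psi_mult_cong[of "Poly (rev b)" "map_poly emb G"]]]
    by (simp add: psi_word_def)
  then have "H div G dvd psi_word (rev b)"
    using assms by (metis dvd_div_mult_self dvd_mult_cancel_right mult.commute)
  then have "rev b \<in> code_of (H div G)" using b(1) by (simp add: code_of_def)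
  then show "b \<in> rev ` code_of (H div G)" by (metis rev_rev_ident imageI)
qed

lemma dual_code_of:
  assumes "G \<noteq> 0" "G dvd H"
  shows "dual_code n (code_of G) = rev ` code_of (H div G)"
  using rev_code_of_subset_dual[OF assms(2)] dual_subset_rev_code_of[OF assms] by blast

end

section \<open>Isodual codes have generators of degree \<open>n\<close>\<close>

lemma monomial_map_inj_on:
  assumes "\<sigma> permutes {..<n}" "\<forall>k<n. w k dvd (1::'r::comm_ring_1)"
  shows "inj_on (monomial_map n \<sigma> w) {c. length c = n}"
proof (rule inj_onI)
  fix c d assume c: "c \<in> {c. length c = n}" and d: "d \<in> {c. length c = n}"
    and eq: "monomial_map n \<sigma> w c = monomial_map n \<sigma> w d"
  have "c ! \<sigma> k = d ! \<sigma> k" if k: "k < n" for k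
  proof -
    obtain v where v: "1 = w k * v" using assms(2) k by (auto elim!: dvdE)
    have "w k * c ! \<sigma> k = w k * d ! \<sigma> k"
      using arg_cong[OF eq, of "\<lambda>l. l ! k"] k by (simp add: monomial_map_def)
    then have "v * (w k * c ! \<sigma> k) = v * (w k * d ! \<sigma> k)" by simp
    then show ?thesis using v by (simp add: mult.assoc[symmetric] mult.commute[of v])
  qed
  moreover have "j \<in> \<sigma> ` {..<n}" if "j < n" for j
    using that permutes_image[OF assms(1)] by simp
  ultimately show "c = d"
    using c d by (intro nth_equalityI) auto
qed

lemma card_eq_card_dual_if_isodual:
  assumes "isodual n C" "\<forall>c\<in>C. length c = n"
  shows "card C = card (dual_code n C)"
proof -
  obtain \<sigma> w where sw: "\<sigma> permutes {..<n}" "\<forall>k<n. w k dvd 1"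
    "monomial_map n \<sigma> w ` C = dual_code n C"
    using assms(1) unfolding isodual_def by blast
  have "C \<subseteq> {c. length c = n}" using assms(2) by auto
  then have "inj_on (monomial_map n \<sigma> w) C"
    by (rule inj_on_subset[OF monomial_map_inj_on[OF sw(1,2)]])
  then show ?thesis using sw(3) card_image by metis
qed

locale finite_dnum_constacyclic = dnum_constacyclic n \<alpha> \<beta> for n and \<alpha> \<beta> :: "'a::{field,finite}"
begin

lemma psi_word_image_code_of:
  assumes "G \<noteq> 0" "G dvd H"
  shows "psi_word ` code_of G = (\<lambda>xs. G * Poly xs) ` {xs. length xs = 2 * n - degree G}"
proof (intro equalityI subsetI)
  let ?k = "2 * n - degree G"
  have deg_G: "degree G \<le> 2 * n" using dvd_imp_degree_le[OF assms(2) H_nonzero] degree_H by simp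
  fix P assume "P \<in> psi_word ` code_of G"
  then obtain c Q where c: "length c = n" "P = psi_word c" "psi_word c = G * Q"
    by (auto simp: code_of_def elim!: dvdE)
  have "Q = Poly (map (coeff Q) [0..<?k])"
  proof (cases "Q = 0")
    case False
    then have "degree Q < ?k"
      using degree_psi_word[OF c(1)] c(3) assms(1) by (simp add: degree_mult_eq)
    then show ?thesis by (simp add: Poly_map_coeff)
  qed (auto intro: poly_eqI simp: nth_default_def)
  then show "P \<in> (\<lambda>xs. G * Poly xs) ` {xs. length xs = ?k}"
    using c by (intro image_eqI[of _ _ "map (coeff Q) [0..<?k]"]) auto
next
  let ?k = "2 * n - degree G"
  have deg_G: "degree G \<le> 2 * n" using dvd_imp_degree_le[OF assms(2) H_nonzero] degree_H by simp
  fix P assume "P \<in> (\<lambda>xs. G * Poly xs) ` {xs. length xs = ?k}"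
  then obtain xs where xs: "length xs = ?k" "P = G * Poly xs" by blast
  have "degree P < 2 * n"
  proof (cases "Poly xs = 0")
    case False
    then have "xs \<noteq> []" by auto
    then have "degree (Poly xs) < ?k" using xs(1) by (metis degree_Poly_less length_greater_0_conv)
    then show ?thesis using xs(2) False assms(1) deg_G by (simp add: degree_mult_eq)
  qed (use xs n_pos in simp)
  then obtain c where c: "length c = n" "psi_word c = P" by (rule psi_word_surj)
  then have "c \<in> code_of G" using xs(2) by (simp add: code_of_def)
  then show "P \<in> psi_word ` code_of G" using \<open>psi_word c = P\<close> by blast
qed

lemma card_code_of:
  assumes "G \<noteq> 0" "G dvd H"
  shows "card (code_of G) = card (UNIV :: 'a set) ^ (2 * n - degree G)"
proof -
  have "inj_on psi_word (code_of G)" by (intro inj_onI psi_word_inj) (auto simp: code_of_def)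
  then have "card (code_of G) = card (psi_word ` code_of G)" by (simp add: card_image)
  also have "\<dots> = card {xs :: 'a list. length xs = 2 * n - degree G}"
    unfolding psi_word_image_code_of[OF assms] using assms(1)
    by (intro card_image inj_onI) (auto intro: Poly_eq_imp_eq)
  also have "\<dots> = card (UNIV :: 'a set) ^ (2 * n - degree G)"
    using card_lists_length_eq[of "UNIV :: 'a set"] by simp
  finally show ?thesis .
qed

lemma degree_eq_if_isodual:
  assumes "G \<noteq> 0" "G dvd H" "isodual n (code_of G)"
  shows "degree G = n"
proof -
  have HG: "H = (H div G) * G" using assms(2) by simp
  then have "H div G \<noteq> 0" using H_nonzero by auto
  have deg: "degree (H div G) + degree G = 2 * n"
    using degree_mult_eq[OF \<open>H div G \<noteq> 0\<close> assms(1)] HG degree_H by simp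
  have "card (code_of G) = card (dual_code n (code_of G))"
    using card_eq_card_dual_if_isodual[OF assms(3)] by (simp add: code_of_def)
  also have "\<dots> = card (code_of (H div G))"
    using dual_code_of[OF assms(1,2)] by (simp add: card_image)
  finally have "card (UNIV :: 'a set) ^ (2 * n - degree G) =
      card (UNIV :: 'a set) ^ (2 * n - degree (H div G))"
    using card_code_of[OF assms(1,2)] card_code_of[OF \<open>H div G \<noteq> 0\<close>] HG by (metis dvd_triv_left)
  moreover have "1 < card (UNIV :: 'a set)"
    using card_mono[of "UNIV :: 'a set" "{0, 1}"] by simp
  ultimately show ?thesis using deg by simp
qed

end

section \<open>The substitution \<open>x \<mapsto> -x\<close>\<close>

definition neg_arg :: "'a::comm_ring_1 poly \<Rightarrow> 'a poly" where
  "neg_arg P = pcompose P [:0, -1:]"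

definition alt_signs :: "'r::comm_ring_1 list \<Rightarrow> 'r list" where
  "alt_signs c = map (\<lambda>k. if even k then c ! k else - (c ! k)) [0..<length c]"

lemma length_alt_signs [simp]: "length (alt_signs c) = length c"
  by (simp add: alt_signs_def)

lemma alt_signs_alt_signs [simp]: "alt_signs (alt_signs c) = c"
  by (rule nth_equalityI) (auto simp: alt_signs_def)

lemma coeff_Poly_alt_signs:
  "coeff (Poly (alt_signs c)) k = (if even k then coeff (Poly c) k else - coeff (Poly c) k)"
  by (simp add: alt_signs_def nth_default_def)

lemma coeff_neg_arg: "coeff (neg_arg P) k = (-1) ^ k * coeff P k"
  by (simp add: neg_arg_def coeff_pcompose_linear)

lemma neg_arg_neg_arg [simp]: "neg_arg (neg_arg P) = P"
  by (rule poly_eqI) (simp add: coeff_neg_arg mult.assoc[symmetric] power_mult_distrib[symmetric])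

lemma neg_arg_add: "neg_arg (P + Q) = neg_arg P + neg_arg Q" by (simp add: neg_arg_def pcompose_add)
lemma neg_arg_mult: "neg_arg (P * Q) = neg_arg P * neg_arg Q" by (simp add: neg_arg_def pcompose_mult)
lemma neg_arg_smult: "neg_arg (smult a P) = smult a (neg_arg P)" by (simp add: neg_arg_def pcompose_smult)
lemma neg_arg_power: "neg_arg (P ^ k) = neg_arg P ^ k"
  by (induction k) (simp_all add: neg_arg_mult, simp add: neg_arg_def pcompose_1)

lemma degree_neg_arg [simp]: "degree (neg_arg (P :: 'a::idom poly)) = degree P"
  by (simp add: neg_arg_def degree_pcompose)

lemma neg_arg_dvd_neg_arg: "G dvd P \<Longrightarrow> neg_arg G dvd neg_arg P"
  by (metis dvd_def neg_arg_mult)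

context dnum_constacyclic
begin

lemma psi_word_alt_signs:
  assumes "even n" shows "psi_word (alt_signs c) = neg_arg (psi_word c)"
proof -
  have "re_poly (Poly (alt_signs c)) = neg_arg (re_poly (Poly c))"
    by (rule poly_eqI) (simp add: coeff_neg_arg coeff_Poly_alt_signs del: coeff_Poly_eq)
  moreover have "ep_poly (Poly (alt_signs c)) = neg_arg (ep_poly (Poly c))"
    by (rule poly_eqI) (simp add: coeff_neg_arg coeff_Poly_alt_signs del: coeff_Poly_eq)
  moreover have "neg_arg E = E"
    by (rule poly_eqI) (use assms in \<open>auto simp: coeff_neg_arg E_def coeff_monom coeff_pCons split: nat.splits\<close>)
  ultimately show ?thesis
    by (simp add: psi_word_def psi_def neg_arg_add neg_arg_smult neg_arg_mult)
qed

lemma alt_signs_code_of: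
  assumes "even n" shows "alt_signs ` code_of G = code_of (neg_arg G)"
proof (intro equalityI subsetI)
  fix d assume "d \<in> alt_signs ` code_of G"
  then obtain c where "length c = n" "G dvd psi_word c" "d = alt_signs c"
    by (auto simp: code_of_def)
  then show "d \<in> code_of (neg_arg G)"
    using neg_arg_dvd_neg_arg by (simp add: code_of_def psi_word_alt_signs[OF assms])
next
  fix d assume "d \<in> code_of (neg_arg G)"
  then have "alt_signs d \<in> code_of G"
    using neg_arg_dvd_neg_arg[of "neg_arg G" "psi_word d"]
    by (simp add: code_of_def psi_word_alt_signs[OF assms])
  then show "d \<in> alt_signs ` code_of G" by (metis alt_signs_alt_signs imageI)
qed

definition rev_perm :: "nat \<Rightarrow> nat" where "rev_perm k = (if k < n then n - 1 - k else k)"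
definition sign_weight :: "nat \<Rightarrow> 'a dnum" where "sign_weight k = (if even (n - 1 - k) then 1 else -1)"

lemma rev_perm_permutes: "rev_perm permutes {..<n}"
proof (rule bij_imp_permutes)
  show "bij_betw rev_perm {..<n} {..<n}"
    by (rule bij_betw_byWitness[where f' = rev_perm]) (auto simp: rev_perm_def)
qed (simp add: rev_perm_def)

lemma monomial_map_rev_perm:
  assumes "length c = n" shows "monomial_map n rev_perm sign_weight c = rev (alt_signs c)"
proof (rule nth_equalityI)
  fix k assume "k < length (monomial_map n rev_perm sign_weight c)"
  then have k: "k < n" by (simp add: monomial_map_def)
  then show "monomial_map n rev_perm sign_weight c ! k = rev (alt_signs c) ! k"
    using assms by (simp add: monomial_map_def rev_perm_def sign_weight_def rev_nth alt_signs_def)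
qed (use assms in \<open>simp add: monomial_map_def\<close>)

lemma isodual_code_of:
  assumes "even n" "G \<noteq> 0" "G dvd H" "neg_arg G = H div G"
  shows "isodual n (code_of G)"
  unfolding isodual_def
proof (intro exI conjI)
  have "monomial_map n rev_perm sign_weight ` code_of G = (rev \<circ> alt_signs) ` code_of G"
    by (rule image_cong) (simp_all add: code_of_def monomial_map_rev_perm)
  also have "\<dots> = rev ` code_of (H div G)"
    unfolding image_comp[symmetric] alt_signs_code_of[OF assms(1)] assms(4) ..
  also have "\<dots> = dual_code n (code_of G)" by (rule dual_code_of[OF assms(2,3), symmetric])
  finally show "monomial_map n rev_perm sign_weight ` code_of G = dual_code n (code_of G)" .
qed (simp_all add: rev_perm_permutes sign_weight_def)

end

section \<open>Classification when \<open>H\<close> is a product of two prime powers\<close>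

lemma prime_elem_power_mult_divisor:
  fixes p :: "'a::idom"
  assumes p: "prime_elem p" and "d dvd p ^ a * y"
  shows "\<exists>i\<le>a. \<exists>d'. d = p ^ i * d' \<and> d' dvd y"
  using assms(2)
proof (induction a arbitrary: d)
  case 0
  then show ?case by auto
next
  case (Suc a)
  have "p \<noteq> 0" using p by auto
  show ?case
  proof (cases "p dvd d")
    case True
    then obtain e where d: "d = p * e" by (rule dvdE)
    then have "p * e dvd p * (p ^ a * y)" using Suc.prems by (simp add: mult.assoc)
    then have "e dvd p ^ a * y" using \<open>p \<noteq> 0\<close> by simp
    then obtain i d' where "i \<le> a" "e = p ^ i * d'" "d' dvd y" using Suc.IH by blast
    then have "Suc i \<le> Suc a" "d = p ^ Suc i * d'" "d' dvd y" using d by (simp_all add: mult.assoc)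
    then show ?thesis by blast
  next
    case False
    obtain k where k: "p ^ Suc a * y = d * k" using Suc.prems by (rule dvdE)
    have "p dvd p ^ Suc a * y" by simp
    then have "p dvd d * k" by (simp only: k)
    then have "p dvd k" using p False prime_elem_dvd_mult_iff by blast
    then obtain k' where "k = p * k'" by (rule dvdE)
    then have "p * (p ^ a * y) = p * (d * k')" using k by (simp add: mult_ac)
    then have "d dvd p ^ a * y" using \<open>p \<noteq> 0\<close> by simp
    then obtain i d' where "i \<le> a" "d = p ^ i * d'" "d' dvd y" using Suc.IH by blast
    then show ?thesis using le_SucI by blast
  qed
qed

lemma divisor_of_prime_elem_powers:
  fixes p q :: "'a::idom"
  assumes p: "prime_elem p" and q: "prime_elem q" and d: "d dvd p ^ a * q ^ b"
  obtains i j where "i \<le> a" "j \<le> b" "d dvd p ^ i * q ^ j" "p ^ i * q ^ j dvd d"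
proof -
  obtain i d' where i: "i \<le> a" "d = p ^ i * d'" "d' dvd q ^ b"
    using prime_elem_power_mult_divisor[OF p d] by blast
  have "\<not> q dvd 1" using q by (simp add: prime_elem_def)
  then obtain j u where j: "j \<le> b" "d' = q ^ j * u" "u dvd 1"
    using prime_elem_power_mult_divisor[OF q, of d' b 1] i(3) by auto
  obtain v where "1 = u * v" using j(3) by (auto elim: dvdE)
  moreover have "d = (p ^ i * q ^ j) * u" using i(2) j(2) by (simp add: mult.assoc)
  ultimately have "d dvd p ^ i * q ^ j" "p ^ i * q ^ j dvd d"
    by (metis dvd_triv_left mult.assoc mult_1_right)+
  then show thesis using that[OF i(1) j(1)] by blast
qed

context finite_dnum_constacyclic
begin

lemma code_of_cong: "G dvd G' \<Longrightarrow> G' dvd G \<Longrightarrow> code_of G = code_of G'"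
  unfolding code_of_def by (auto intro: dvd_trans)

lemma code_of_generator_if_isodual:
  assumes "prime_elem f" "prime_elem g" "degree g = degree f" "H = (f * g) ^ k"
    and "constacyclic_code n (DN \<alpha> \<beta>) C" "isodual n C"
  obtains i where "i \<le> k" "C = code_of (f ^ i * g ^ (k - i))"
proof -
  obtain G where G: "G \<noteq> 0" "G dvd H" "C = code_of G"
    using constacyclic_code_eq_code_of[OF assms(5)] by blast
  have "degree G = n" using degree_eq_if_isodual[OF G(1,2)] assms(6) G(3) by simp
  obtain i j where ij: "i \<le> k" "j \<le> k" "G dvd f ^ i * g ^ j" "f ^ i * g ^ j dvd G"
    using divisor_of_prime_elem_powers[OF assms(1,2), of G k k] G(2) assms(4)
    by (metis power_mult_distrib)
  have "f \<noteq> 0" "g \<noteq> 0" "degree f \<noteq> 0"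
    using assms(1,2) is_unit_iff_degree[of f] by auto
  moreover have "degree G = degree (f ^ i * g ^ j)"
    using ij(3,4) G(1) \<open>f \<noteq> 0\<close> \<open>g \<noteq> 0\<close> by (intro antisym dvd_imp_degree_le) auto
  ultimately have "n = (i + j) * degree f" "2 * n = 2 * k * degree f"
    using \<open>degree G = n\<close> degree_H assms(3,4) by (simp_all add: degree_mult_eq degree_power_eq algebra_simps)
  then have "j = k - i" using \<open>degree f \<noteq> 0\<close> by simp
  then show thesis using that ij G(3) code_of_cong by blast
qed

theorem isodual_constacyclic_codes_eq:
  assumes "even n" "prime_elem f" "prime_elem g" "neg_arg f = g" "H = (f * g) ^ k"
    and "psi f' = f" "psi g' = g"
  shows "{C. constacyclic_code n (DN \<alpha> \<beta>) C \<and> isodual n C} =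
    (\<lambda>i. principal_ideal_code n (DN \<alpha> \<beta>) (f' ^ i * g' ^ (k - i))) ` {0..k}"
proof -
  define F where "F i = f ^ i * g ^ (k - i)" for i
  have H_eq: "H = F i * (f ^ (k - i) * g ^ i)" if "i \<le> k" for i
  proof -
    have "F i * (f ^ (k - i) * g ^ i) = (f ^ i * f ^ (k - i)) * (g ^ (k - i) * g ^ i)"
      by (simp add: F_def mult_ac)
    also have "\<dots> = (f * g) ^ k" using that by (simp add: power_mult_distrib flip: power_add)
    finally show ?thesis using assms(5) by simp
  qed
  have F: "F i \<noteq> 0" "F i dvd H" "neg_arg (F i) = H div F i" if "i \<le> k" for i
    using assms(2-4) H_eq[OF that]
    by (auto simp: F_def neg_arg_mult neg_arg_power mult.commute[of "g ^ _"])
  have code: "principal_ideal_code n (DN \<alpha> \<beta>) (f' ^ i * g' ^ (k - i)) = code_of (F i)" if "i \<le> k" for i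
    using F(2)[OF that] psi_mult_cong'[OF psi_power_cong psi_power_cong] assms(6,7)
    by (intro principal_ideal_code_eq_code_of) (auto simp: F_def)
  have "degree g = degree f" using assms(4) by auto
  show ?thesis
  proof (intro equalityI subsetI)
    fix C assume "C \<in> {C. constacyclic_code n (DN \<alpha> \<beta>) C \<and> isodual n C}"
    then obtain i where "i \<le> k" "C = code_of (F i)"
      using code_of_generator_if_isodual[OF assms(2,3) \<open>degree g = degree f\<close> assms(5)]
      unfolding F_def by blast
    then show "C \<in> (\<lambda>i. principal_ideal_code n (DN \<alpha> \<beta>) (f' ^ i * g' ^ (k - i))) ` {0..k}"
      using code by auto
  next
    fix C assume "C \<in> (\<lambda>i. principal_ideal_code n (DN \<alpha> \<beta>) (f' ^ i * g' ^ (k - i))) ` {0..k}"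
    then obtain i where "i \<le> k" "C = code_of (F i)" using code by auto
    then show "C \<in> {C. constacyclic_code n (DN \<alpha> \<beta>) C \<and> isodual n C}"
      using constacyclic_code_of isodual_code_of[OF assms(1)] F by simp
  qed
qed

end

section \<open>The factorization of \<open>x\<^bsup>4p\<^sup>s\<^esup> - \<alpha>\<close>\<close>

lemma CHAR_eq_if_card_eq_prime_power:
  assumes "prime p" "card (UNIV :: 'a::{field,finite} set) = p ^ m" "m > 0"
  shows "CHAR('a) = p"
proof -
  have "prime CHAR('a)" by (rule prime_CHAR_semidom) (simp add: finite_imp_CHAR_pos)
  moreover have "CHAR('a) dvd p ^ m" using CHAR_dvd_CARD[where 'a='a] assms(2) by simp
  ultimately have "CHAR('a) dvd p" by (rule prime_dvd_power)
  then show ?thesis by (rule primes_dvd_imp_eq[OF \<open>prime CHAR('a)\<close> assms(1)])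
qed

lemma x_pow_minus_const_power_CHAR:
  fixes c :: "'a::field"
  assumes "prime CHAR('a)" "odd CHAR('a)"
  shows "(monom 1 k - [:c:]) ^ (CHAR('a) ^ s) = monom 1 (k * CHAR('a) ^ s) - [:c ^ (CHAR('a) ^ s):]"
proof -
  have "monom 1 k - [:c:] = monom 1 k + [:- c:]" by (simp only: diff_conv_add_uminus) simp
  also have "\<dots> ^ (CHAR('a) ^ s) = monom 1 k ^ (CHAR('a) ^ s) + [:- c:] ^ (CHAR('a) ^ s)"
    by (rule freshmans_dream') (simp_all add: assms(1))
  also have "\<dots> = monom 1 (k * CHAR('a) ^ s) - [:c ^ (CHAR('a) ^ s):]"
    using assms(2) by (simp add: monom_power poly_const_pow power_minus_odd)
  finally show ?thesis .
qed

lemma two_nonzero_if_odd_CHAR: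
  assumes "prime CHAR('a::semiring_1)" "odd CHAR('a)"
  shows "(2::'a) \<noteq> 0"
proof -
  have "\<not> CHAR('a) dvd 2" using assms primes_dvd_imp_eq[OF assms(1) two_is_prime_nat] by auto
  then show ?thesis using of_nat_eq_0_iff_char_dvd[of 2, where 'a='a] by simp
qed

lemma power_four_neq_if_not_square:
  fixes a :: "'a::comm_ring_1"
  assumes "\<not> (\<exists>y. y ^ 2 = a ^ q)"
  shows "r ^ 4 \<noteq> a"
proof
  assume "r ^ 4 = a"
  have "(r ^ (2 * q)) ^ 2 = (r ^ 4) ^ q"
    by (simp add: power_mult[symmetric] mult.commute mult.left_commute)
  then have "(r ^ (2 * q)) ^ 2 = a ^ q" using \<open>r ^ 4 = a\<close> by simp
  then show False using assms by blast
qed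

text \<open>Sophie Germain's identity \<open>x\<^sup>4 + 4b\<^sup>4 = (x\<^sup>2 + 2bx + 2b\<^sup>2)(x\<^sup>2 - 2bx + 2b\<^sup>2)\<close> with \<open>\<gamma> = 2b\<close>.\<close>

lemma sophie_germain_factorization:
  fixes \<gamma> a :: "'a::field"
  assumes "(2::'a) \<noteq> 0" "\<gamma> ^ 4 + 4 * a = 0"
  shows "[:\<gamma>\<^sup>2 / 2, \<gamma>, 1:] * [:\<gamma>\<^sup>2 / 2, - \<gamma>, 1:] = monom 1 4 - [:a:]"
proof -
  have "(4::'a) \<noteq> 0" using mult_eq_0_iff[of "2::'a" 2] assms(1) by simp
  then have "\<gamma>\<^sup>2 / 2 * (\<gamma>\<^sup>2 / 2) = - a"
    using assms(2) by (simp add: power2_eq_square power4_eq_xxxx field_simps add_eq_0_iff2)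
  moreover have "\<gamma>\<^sup>2 / 2 + \<gamma>\<^sup>2 / 2 = \<gamma> * \<gamma>" using assms(1) by (simp add: power2_eq_square field_simps)
  moreover have "monom (1::'a) 4 = [:0, 0, 0, 0, 1:]" by (simp add: monom_Suc numeral_eq_Suc monom_0)
  ultimately show ?thesis by (simp add: algebra_simps)
qed

lemma prime_elem_quadratic_if_no_root:
  fixes f :: "'a::field poly"
  assumes "degree f = 2" "\<And>r. poly f r \<noteq> 0"
  shows "prime_elem f"
proof (intro field_poly_irreducible_imp_prime irreducibleI)
  show f0: "f \<noteq> 0" using assms(1) by auto
  show "\<not> f dvd 1" using assms(1) is_unit_iff_degree[OF f0] by simp
  fix a b assume ab: "f = a * b"
  then have "a \<noteq> 0" "b \<noteq> 0" using f0 by auto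
  then have "degree a + degree b = 2" using ab assms(1) by (simp add: degree_mult_eq)
  moreover have "degree a \<noteq> 1"
  proof
    assume "degree a = 1"
    then obtain b0 a1 where a: "a = [:b0, a1:]" "a1 \<noteq> 0" by (metis degree1_coeffs)
    then have "poly f (- b0 / a1) = 0" using ab by (simp add: field_simps)
    then show False using assms(2) by blast
  qed
  ultimately have "degree a = 0 \<or> degree b = 0" by arith
  then show "a dvd 1 \<or> b dvd 1" using \<open>a \<noteq> 0\<close> \<open>b \<noteq> 0\<close> is_unit_iff_degree by auto
qed

theorem corollary3p8:
  fixes p m s :: nat
    and \<alpha> \<alpha>\<^sub>0 \<beta> \<gamma> :: "'a::{field,finite}"
  assumes "prime p" and "odd p" and "m > 0" and "s > 0"
    and "card (UNIV :: 'a set) = p ^ m" and "p ^ m mod 4 = 3"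
    and "\<alpha> \<noteq> 0" and "\<not> (\<exists>y. y ^ 2 = \<alpha>)"
    and "\<alpha>\<^sub>0 ^ (p ^ s) = \<alpha>"
    and "\<gamma> ^ 4 + 4 * \<alpha>\<^sub>0 = 0"
    and "\<beta> \<noteq> 0"
  shows "{C. constacyclic_code (4 * p ^ s) (DN \<alpha> \<beta>) C \<and> isodual (4 * p ^ s) C} =
    (\<lambda>i. principal_ideal_code (4 * p ^ s) (DN \<alpha> \<beta>)
        ([:emb (\<gamma>\<^sup>2 / 2), emb \<gamma>, 1:] ^ i * [:emb (\<gamma>\<^sup>2 / 2), emb (- \<gamma>), 1:] ^ (2 * p ^ s - i)))
      ` {0..2 * p ^ s}"
proof -
  interpret finite_dnum_constacyclic "4 * p ^ s" \<alpha> \<beta>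
    using assms(1,11) by unfold_locales (simp_all add: prime_gt_0_nat)
  have char: "CHAR('a) = p" by (rule CHAR_eq_if_card_eq_prime_power[OF assms(1,5,3)])
  define f1 where "f1 = [:\<gamma>\<^sup>2 / 2, \<gamma>, 1:]"
  define f2 where "f2 = [:\<gamma>\<^sup>2 / 2, - \<gamma>, 1:]"
  have f1f2: "f1 * f2 = monom 1 4 - [:\<alpha>\<^sub>0:]"
    unfolding f1_def f2_def using two_nonzero_if_odd_CHAR[where 'a='a] assms(1,2,10) char
    by (intro sophie_germain_factorization) simp_all
  have "E = (f1 * f2) ^ (p ^ s)"
    unfolding E_def f1f2 using x_pow_minus_const_power_CHAR[of 4 \<alpha>\<^sub>0 s] assms(1,2,9) char
    by (simp add: mult.commute)
  then have "H = (f1 * f2) ^ (2 * p ^ s)" by (rule H_eq_power_if_E_eq_power)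
  moreover have "poly f1 r \<noteq> 0 \<and> poly f2 r \<noteq> 0" for r
    using arg_cong[OF f1f2, of "\<lambda>f. poly f r"] power_four_neq_if_not_square[of \<alpha>\<^sub>0 "p ^ s" r] assms(8,9)
    by (auto simp: poly_monom)
  then have "prime_elem f1" "prime_elem f2"
    by (auto intro!: prime_elem_quadratic_if_no_root simp: f1_def f2_def)
  moreover have "neg_arg f1 = f2" by (simp add: neg_arg_def f1_def f2_def pcompose_pCons)
  moreover have "psi [:emb a, emb b, 1:] = [:a, b, 1:]" for a b
    using psi_map_poly_emb[of "[:a, b, 1:]"] by simp
  ultimately show ?thesis
    unfolding f1_def f2_def by (intro isodual_constacyclic_codes_eq) simp_all
qed

end
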